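(* Let $G$ be a finite nilpotent group and let $V=\{1,v_1,v_2,v_3\}$ be a four-group acting on $G$ by automorphisms with $C_G(V)=1$. Put $G_i=C_G(v_i)$ for $i=1,2,3$. For $x\in G_i$ and $y\in G_j$ with $i\neq j$, let $k$ be such that $\{i,j,k\}=\{1,2,3\}$ and define $x*y=s$, where $(s,t)\in G_k\times G_j$ is the unique pair with $y^x=sts$. Define $R_1=\langle a*b : a\in G_2,b\in G_3\rangle$, $R_2=\langle a*b : a\in G_1,b\in G_3\rangle$, $R_3=\langle a*b : a\in G_1,b\in G_2\rangle$. Then $G_i\cap G'=R_i$ for $i=1,2,3$.
   Context: $G'$ is the derived subgroup of $G$. It is known that under these hypotheses $G$ has odd order, each $G_i$ is abelian, and for $x\in G_i$, $y\in G_j$ with $i\ne j$ the element $y^x$ is inverted by $v_i$, so there is a unique pair $(s,t)\in G_k\times G_j$ with $y^x=sts$; hence $x*y$ is well defined. *)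

theory Defs
  imports "HOL-Algebra.Algebra"
begin

text \<open>Lower central series: gamma_0 = G, gamma_(n+1) = [gamma_n, G].\<close>
definition lower_central :: "('a, 'b) monoid_scheme \<Rightarrow> nat \<Rightarrow> 'a set" where
  "lower_central G n =
     ((\<lambda>H. generate G (\<Union>h \<in> H. \<Union>g \<in> carrier G.
              { h \<otimes>\<^bsub>G\<^esub> g \<otimes>\<^bsub>G\<^esub> inv\<^bsub>G\<^esub> h \<otimes>\<^bsub>G\<^esub> inv\<^bsub>G\<^esub> g })) ^^ n) (carrier G)"

definition nilpotent_group :: "('a, 'b) monoid_scheme \<Rightarrow> bool" where
  "nilpotent_group G \<longleftrightarrow> group G \<and> (\<exists>n. lower_central G n = {\<one>\<^bsub>G\<^esub>})"

definition fixpts :: "('a, 'b) monoid_scheme \<Rightarrow> ('a \<Rightarrow> 'a) \<Rightarrow> 'a set" where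
  "fixpts G v = {g \<in> carrier G. v g = g}"

definition four_group_action ::
  "('a, 'b) monoid_scheme \<Rightarrow> ('a \<Rightarrow> 'a) \<Rightarrow> ('a \<Rightarrow> 'a) \<Rightarrow> ('a \<Rightarrow> 'a) \<Rightarrow> bool" where
  "four_group_action G v1 v2 v3 \<longleftrightarrow>
     v1 \<in> iso G G \<and> v2 \<in> iso G G \<and> v3 \<in> iso G G \<and>
     (\<forall>g \<in> carrier G. v1 (v1 g) = g \<and> v2 (v2 g) = g \<and> v3 (v3 g) = g \<and> v1 (v2 g) = v3 g)"

definition star :: "('a, 'b) monoid_scheme \<Rightarrow> 'a set \<Rightarrow> 'a set \<Rightarrow> 'a \<Rightarrow> 'a \<Rightarrow> 'a" where
  "star G Gk Gj x y = (THE s. \<exists>t. s \<in> Gk \<and> t \<in> Gj \<and>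
      inv\<^bsub>G\<^esub> x \<otimes>\<^bsub>G\<^esub> y \<otimes>\<^bsub>G\<^esub> x = s \<otimes>\<^bsub>G\<^esub> t \<otimes>\<^bsub>G\<^esub> s)"

end

theory Submission
  imports Defs
begin

text \<open>
  Counting fixed points of involutions, |G| \<equiv> |C_G(v1)| \<equiv> |C_G(V)| = 1 (mod 2), so G has odd
  order: square roots exist, are unique and commute with endomorphisms. Using them one shows that
  v_i inverts G_j for i \<noteq> j, obtains the factorisation y^x = s t s defining x * y, and writes every
  element of a V-invariant subgroup as a product c (s t s) of fixed points of v1, v2, v3.

  R_i \<subseteq> G_i \<inter> G' because x * y lies in every normal subgroup containing [x, y]. Conversely,
  descend the lower central series \<gamma>. Modulo \<gamma>(k+2) the section \<gamma>(k+1) is central, commutators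
  are multiplicative in each argument and the norm w \<mapsto> w v_i(w) is a homomorphism on \<gamma>(k+1).
  Checking commutators of fixed points (the identity defining x * y handles x \<in> G_j, y \<in> G_k),
  the norm maps \<gamma>(k+1) into R_i \<gamma>(k+2). On G_i the norm is squaring, so taking square roots
  gives G_i \<inter> \<gamma>(k+1) \<subseteq> R_i \<gamma>(k+2), and nilpotency ends the descent.
\<close>

section \<open>Commutators and the lower central series\<close>

definition commutator :: "('a, 'b) monoid_scheme \<Rightarrow> 'a \<Rightarrow> 'a \<Rightarrow> 'a" where
  "commutator G x y = x \<otimes>\<^bsub>G\<^esub> y \<otimes>\<^bsub>G\<^esub> inv\<^bsub>G\<^esub> x \<otimes>\<^bsub>G\<^esub> inv\<^bsub>G\<^esub> y"

context group
begin

lemma l_inv_assoc [simp]: "x \<in> carrier G \<Longrightarrow> y \<in> carrier G \<Longrightarrow> inv x \<otimes> (x \<otimes> y) = y"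
  by (simp add: m_assoc[symmetric])

lemma r_inv_assoc [simp]: "x \<in> carrier G \<Longrightarrow> y \<in> carrier G \<Longrightarrow> x \<otimes> (inv x \<otimes> y) = y"
  by (simp add: m_assoc[symmetric])

lemma square_eq_inv_of_inv_eq_mult:
  assumes k: "k \<in> carrier G" and v: "v \<in> carrier G"
    and comm: "k \<otimes> v = v \<otimes> k" and eq: "inv k = v \<otimes> k"
  shows "k \<otimes> k = inv v"
proof -
  have "(k \<otimes> k) \<otimes> v = k \<otimes> (v \<otimes> k)" using comm k v by (simp add: m_assoc)
  also have "\<dots> = \<one>" using eq k by (simp flip: eq)
  finally show ?thesis using k v by (simp add: inv_equality)
qed

lemma commutator_closed [simp]:
  "x \<in> carrier G \<Longrightarrow> y \<in> carrier G \<Longrightarrow> commutator G x y \<in> carrier G"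
  by (simp add: commutator_def)

lemma commutator_eq_one_iff:
  assumes "x \<in> carrier G" "y \<in> carrier G"
  shows "commutator G x y = \<one> \<longleftrightarrow> x \<otimes> y = y \<otimes> x"
proof -
  have "commutator G x y = (x \<otimes> y) \<otimes> inv (y \<otimes> x)"
    using assms by (simp add: commutator_def inv_mult_group m_assoc)
  then show ?thesis using assms by (simp add: inv_solve_right')
qed

lemma inv_commutator:
  "x \<in> carrier G \<Longrightarrow> y \<in> carrier G \<Longrightarrow> inv (commutator G x y) = commutator G y x"
  by (simp add: commutator_def inv_mult_group m_assoc)

lemma commutator_mult_right:
  "x \<in> carrier G \<Longrightarrow> y \<in> carrier G \<Longrightarrow> y' \<in> carrier G \<Longrightarrow>
    commutator G x (y \<otimes> y') = commutator G x y \<otimes> (y \<otimes> commutator G x y' \<otimes> inv y)"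
  by (simp add: commutator_def inv_mult_group m_assoc)

lemma commutator_inv_left:
  "x \<in> carrier G \<Longrightarrow> y \<in> carrier G \<Longrightarrow>
    commutator G (inv x) y = inv x \<otimes> inv (commutator G x y) \<otimes> x"
  by (simp add: commutator_def inv_mult_group m_assoc)

lemma commutator_inv_right:
  "x \<in> carrier G \<Longrightarrow> y \<in> carrier G \<Longrightarrow>
    commutator G x (inv y) = inv y \<otimes> inv (commutator G x y) \<otimes> y"
  by (simp add: commutator_def inv_mult_group m_assoc)

lemma conj_commutator:
  "g \<in> carrier G \<Longrightarrow> x \<in> carrier G \<Longrightarrow> y \<in> carrier G \<Longrightarrow>
    g \<otimes> commutator G x y \<otimes> inv g = commutator G (g \<otimes> x \<otimes> inv g) (g \<otimes> y \<otimes> inv g)"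
  by (simp add: commutator_def inv_mult_group m_assoc)

end

lemma (in group_hom) hom_commutator:
  "x \<in> carrier G \<Longrightarrow> y \<in> carrier G \<Longrightarrow> h (commutator G x y) = commutator H (h x) (h y)"
  by (simp add: commutator_def)

context group
begin

lemma lower_central_0: "lower_central G 0 = carrier G"
  by (simp add: lower_central_def)

lemma lower_central_Suc:
  "lower_central G (Suc n) =
     generate G {commutator G h g | h g. h \<in> lower_central G n \<and> g \<in> carrier G}"
proof -
  have "(\<Union>h \<in> lower_central G n. \<Union>g \<in> carrier G. {h \<otimes> g \<otimes> inv h \<otimes> inv g}) =
        {commutator G h g | h g. h \<in> lower_central G n \<and> g \<in> carrier G}"
    by (auto simp: commutator_def)
  then show ?thesis by (simp add: lower_central_def)
qed

lemma lower_central_Suc_0: "lower_central G (Suc 0) = derived G (carrier G)"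
proof -
  have "{commutator G h g | h g. h \<in> carrier G \<and> g \<in> carrier G} = derived_set G (carrier G)"
    by (auto simp: commutator_def)
  then show ?thesis by (simp add: lower_central_Suc lower_central_0 derived_def)
qed

lemma lower_central_normal: "lower_central G n \<lhd> G"
proof (induction n)
  case 0
  then show ?case by (simp add: lower_central_0 normal_self)
next
  case (Suc n)
  interpret normal "lower_central G n" G by (rule Suc)
  show ?case unfolding lower_central_Suc
  proof (rule normal_generateI)
    show "{commutator G h g | h g. h \<in> lower_central G n \<and> g \<in> carrier G} \<subseteq> carrier G"
      by auto
  next
    fix c x
    assume "c \<in> {commutator G h g | h g. h \<in> lower_central G n \<and> g \<in> carrier G}"
      and x: "x \<in> carrier G"
    then obtain h g where h: "h \<in> lower_central G n" and g: "g \<in> carrier G"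
      and c: "c = commutator G h g" by blast
    have "x \<otimes> c \<otimes> inv x = commutator G (x \<otimes> h \<otimes> inv x) (x \<otimes> g \<otimes> inv x)"
      using c h g x by (simp add: conj_commutator)
    moreover have "x \<otimes> h \<otimes> inv x \<in> lower_central G n"
      using x h by (rule inv_op_closed2)
    ultimately show "x \<otimes> c \<otimes> inv x \<in>
        {commutator G h g | h g. h \<in> lower_central G n \<and> g \<in> carrier G}"
      using g x by blast
  qed
qed

lemma lower_central_subgroup: "subgroup (lower_central G n) G"
  using lower_central_normal normal_imp_subgroup by blast

lemma lower_central_carrier: "x \<in> lower_central G n \<Longrightarrow> x \<in> carrier G"
  using subgroup.mem_carrier[OF lower_central_subgroup] .

lemma commutator_in_lower_central_Suc:
  "h \<in> lower_central G n \<Longrightarrow> g \<in> carrier G \<Longrightarrow> commutator G h g \<in> lower_central G (Suc n)"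
  unfolding lower_central_Suc by (rule generate.incl) blast

lemma lower_central_Suc_subset: "lower_central G (Suc n) \<subseteq> lower_central G n"
  unfolding lower_central_Suc
proof (rule generate_subgroup_incl[OF _ lower_central_subgroup], safe)
  interpret normal "lower_central G n" G by (rule lower_central_normal)
  fix h g assume h: "h \<in> lower_central G n" and g: "g \<in> carrier G"
  have "g \<otimes> inv h \<otimes> inv g \<in> lower_central G n"
    using g h by (simp add: inv_op_closed2)
  then have "h \<otimes> (g \<otimes> inv h \<otimes> inv g) \<in> lower_central G n"
    using h by simp
  then show "commutator G h g \<in> lower_central G n"
    using g h by (simp add: commutator_def m_assoc)
qed

lemma endomorphism_image_lower_central:
  assumes f: "f \<in> hom G G"
  shows "f ` lower_central G n \<subseteq> lower_central G n"
proof (induction n)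
  case 0
  then show ?case using f by (auto simp: lower_central_0 hom_def)
next
  case (Suc n)
  interpret group_hom G G f by (simp add: group_hom_axioms_def group_hom_def f is_group)
  let ?C = "\<lambda>n. {commutator G h g | h g. h \<in> lower_central G n \<and> g \<in> carrier G}"
  have "f ` ?C n \<subseteq> ?C n"
    using Suc by (force simp: hom_commutator lower_central_carrier)
  then have "generate G (f ` ?C n) \<subseteq> generate G (?C n)"
    by (rule mono_generate)
  moreover have "generate G (f ` ?C n) = f ` generate G (?C n)"
    by (rule generate_img) (auto simp: lower_central_carrier)
  ultimately show ?case by (simp add: lower_central_Suc)
qed

end

section \<open>Square roots in groups of odd order\<close>

definition group_sqrt :: "('a, 'b) monoid_scheme \<Rightarrow> 'a \<Rightarrow> 'a" where
  "group_sqrt G x = x [^]\<^bsub>G\<^esub> ((order G + 1) div 2)"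

context group
begin

lemma group_sqrt_closed [simp]: "x \<in> carrier G \<Longrightarrow> group_sqrt G x \<in> carrier G"
  by (simp add: group_sqrt_def)

lemma group_sqrt_square:
  assumes "odd (order G)" "x \<in> carrier G"
  shows "group_sqrt G x \<otimes> group_sqrt G x = x"
proof -
  have "(order G + 1) div 2 + (order G + 1) div 2 = order G + 1"
    using assms(1) by presburger
  then show ?thesis
    using assms(2) by (simp add: group_sqrt_def nat_pow_mult pow_order_eq_1)
qed

lemma group_sqrt_of_square:
  assumes "odd (order G)" "x \<in> carrier G"
  shows "group_sqrt G (x \<otimes> x) = x"
proof -
  have "x \<otimes> x = x [^] (2::nat)" using assms(2) by (simp add: numeral_2_eq_2)
  then have "group_sqrt G (x \<otimes> x) = x [^] ((order G + 1) div 2 + (order G + 1) div 2)"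
    using assms(2) by (simp add: group_sqrt_def nat_pow_pow mult_2)
  also have "\<dots> = x"
    using group_sqrt_square[OF assms] assms(2) by (simp add: group_sqrt_def nat_pow_mult)
  finally show ?thesis .
qed

lemma square_eq_square_imp_eq:
  "odd (order G) \<Longrightarrow> x \<in> carrier G \<Longrightarrow> y \<in> carrier G \<Longrightarrow> x \<otimes> x = y \<otimes> y \<Longrightarrow> x = y"
  by (metis group_sqrt_of_square)

lemma group_sqrt_mem_subgroup:
  assumes "subgroup H G" "x \<in> H"
  shows "group_sqrt G x \<in> H"
proof -
  have "x [^] (n::nat) \<in> H" for n
    by (induction n) (use assms in \<open>auto simp: subgroup.one_closed subgroup.m_closed\<close>)
  then show ?thesis by (simp add: group_sqrt_def)
qed

lemma square_mem_subgroup_imp_mem: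
  "odd (order G) \<Longrightarrow> subgroup H G \<Longrightarrow> x \<in> carrier G \<Longrightarrow> x \<otimes> x \<in> H \<Longrightarrow> x \<in> H"
  by (metis group_sqrt_mem_subgroup group_sqrt_of_square)

lemma group_sqrt_inv: "x \<in> carrier G \<Longrightarrow> group_sqrt G (inv x) = inv (group_sqrt G x)"
  by (simp add: group_sqrt_def nat_pow_inv)

lemma endomorphism_group_sqrt:
  assumes "f \<in> hom G G" "x \<in> carrier G"
  shows "f (group_sqrt G x) = group_sqrt G (f x)"
proof -
  interpret group_hom G G f by (simp add: group_hom_axioms_def group_hom_def assms(1) is_group)
  show ?thesis using assms(2) by (simp add: group_sqrt_def hom_nat_pow)
qed

text \<open>In a group of odd order, \<open>w z w = z\<close> forces \<open>w\<close> to commute with \<open>z\<^sup>2\<close> and hence with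
  its square root \<open>z\<close>; then \<open>w\<^sup>2 = 1\<close>.\<close>
lemma odd_order_sandwich_imp_one:
  assumes odd: "odd (order G)" and w: "w \<in> carrier G" and z: "z \<in> carrier G"
    and wzw: "w \<otimes> z \<otimes> w = z"
  shows "w = \<one>"
proof -
  have "inv w \<otimes> (w \<otimes> z \<otimes> w) = z \<otimes> w" using w z by (simp add: m_assoc)
  then have zw: "z \<otimes> w = inv w \<otimes> z" using wzw by simp
  have "(w \<otimes> z \<otimes> w) \<otimes> inv w = w \<otimes> z" using w z by (simp add: m_assoc)
  then have wz: "w \<otimes> z = z \<otimes> inv w" using wzw by simp
  have "(z \<otimes> z) \<otimes> w = w \<otimes> (z \<otimes> z)"
  proof -
    have "(z \<otimes> z) \<otimes> w = z \<otimes> inv w \<otimes> z" using zw w z by (simp add: m_assoc)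
    also have "\<dots> = w \<otimes> (z \<otimes> z)" using wz w z by (simp add: m_assoc[symmetric])
    finally show ?thesis .
  qed
  then have "group_sqrt G (z \<otimes> z) \<otimes> w = w \<otimes> group_sqrt G (z \<otimes> z)"
    using w z by (simp add: group_sqrt_def group_commutes_pow)
  then have "inv w \<otimes> z = w \<otimes> z"
    using zw group_sqrt_of_square[OF odd z] by simp
  then have "inv w = w" using w z by simp
  then have "w \<otimes> w = \<one> \<otimes> \<one>" using w by (metis l_inv one_closed r_one)
  then show ?thesis using square_eq_square_imp_eq[OF odd w] by simp
qed

end

section \<open>Quotient groups\<close>

context normal
begin

lemma odd_order_FactGroup:
  assumes "odd (order G)" shows "odd (order (G Mod H))"
proof -
  have "odd (card (rcosets H) * card H)" using assms lagrange[OF subgroup_axioms] by simp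
  then show ?thesis by (simp add: order_def FactGroup_def)
qed

lemma rcos_hom: "group_hom G (G Mod H) (\<lambda>x. H #> x)"
  by (simp add: group_hom_def group_hom_axioms_def is_group factorgroup_is_group r_coset_hom_Mod)

lemma rcos_eq_iff:
  assumes x: "x \<in> carrier G" and y: "y \<in> carrier G"
  shows "H #> x = H #> y \<longleftrightarrow> x \<otimes> inv y \<in> H"
proof
  assume "H #> x = H #> y"
  then show "x \<otimes> inv y \<in> H" by (metis rcos_module_imp rcos_self subgroup_axioms is_group x y)
next
  assume "x \<otimes> inv y \<in> H"
  then have "x \<in> H #> y" using x y by (intro rcos_module_rev is_group)
  then show "H #> x = H #> y" using y by (metis repr_independence subgroup_axioms)
qed

lemma rcos_eq_one_iff: "x \<in> carrier G \<Longrightarrow> H #> x = \<one>\<^bsub>G Mod H\<^esub> \<longleftrightarrow> x \<in> H"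
  using rcos_eq_iff[of x \<one>] by (simp add: subset)

end

text \<open>From here on \<open>G Mod H\<close> is treated as an abstract group, not via products of coset sets.\<close>

declare mult_FactGroup [simp del] one_FactGroup [simp del]

lemma (in normal) commutator_mem_imp_rcos_commute:
  assumes x: "x \<in> carrier G" and y: "y \<in> carrier G" and xy: "commutator G x y \<in> H"
  shows "(H #> x) \<otimes>\<^bsub>G Mod H\<^esub> (H #> y) = (H #> y) \<otimes>\<^bsub>G Mod H\<^esub> (H #> x)"
proof -
  interpret \<pi>: group_hom G "G Mod H" "\<lambda>x. H #> x" by (rule rcos_hom)
  have "commutator (G Mod H) (H #> x) (H #> y) = \<one>\<^bsub>G Mod H\<^esub>"
    using x y xy by (simp add: \<pi>.hom_commutator[symmetric] rcos_eq_one_iff)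
  then show ?thesis using x y by (simp add: \<pi>.H.commutator_eq_one_iff)
qed

section \<open>Fixed-point-free actions of the four-group\<close>

lemma even_card_iff_even_card_fixpoints:
  assumes "finite A" "\<And>x. x \<in> A \<Longrightarrow> f x \<in> A" "\<And>x. x \<in> A \<Longrightarrow> f (f x) = x"
  shows "even (card A) \<longleftrightarrow> even (card {x \<in> A. f x = x})"
  using assms
proof (induction "card A" arbitrary: A rule: less_induct)
  case less
  show ?case
  proof (cases "\<exists>x\<in>A. f x \<noteq> x")
    case False
    then have "{x \<in> A. f x = x} = A" by auto
    then show ?thesis by simp
  next
    case True
    then obtain x where x: "x \<in> A" "f x \<noteq> x" by auto
    let ?B = "A - {x, f x}"
    have card_A: "card A = card ?B + 2"
    proof -
      have sub: "{x, f x} \<subseteq> A" using x less.prems(2) by blast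
      have "card {x, f x} = 2" using x(2) by simp
      then show ?thesis
        using less.prems(1) card_Diff_subset[of "{x, f x}" A] card_mono[OF less.prems(1) sub] sub
        by simp
    qed
    have closed: "f y \<in> ?B" if y: "y \<in> ?B" for y
    proof -
      have "f y \<noteq> x" "f y \<noteq> f x" using y less.prems(3) x(1) by (metis DiffE insertCI)+
      then show ?thesis using y less.prems(2) by blast
    qed
    have "even (card ?B) \<longleftrightarrow> even (card {y \<in> ?B. f y = y})"
    proof (rule less.hyps)
      show "card ?B < card A" using card_A by simp
    qed (use closed less.prems(1,3) in auto)
    moreover have "{y \<in> ?B. f y = y} = {y \<in> A. f y = y}"
      using x less.prems(3) by auto
    ultimately show ?thesis using card_A by simp
  qed
qed

lemma fixpts_carrier: "x \<in> fixpts G f \<Longrightarrow> x \<in> carrier G"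
  by (simp add: fixpts_def)

lemma (in group) fixpts_subgroup:
  assumes "f \<in> hom G G" shows "subgroup (fixpts G f) G"
proof -
  interpret group_hom G G f by (simp add: group_hom_axioms_def group_hom_def assms is_group)
  show ?thesis by (rule subgroupI) (auto simp: fixpts_def)
qed

text \<open>
  \<open>p, q, r\<close> are the involutions \<open>v\<^sub>1, v\<^sub>2, v\<^sub>3\<close> in some order. Results are stated for
  \<open>C\<^sub>G(q)\<close>; the cases of the other two involutions are obtained by permuting the roles,
  see \<open>fpf_four_group_swap\<close> and \<open>fpf_four_group_rotate\<close>.
\<close>
locale fpf_four_group = group G for G (structure) +
  fixes p q r :: "'a \<Rightarrow> 'a"
  assumes finite_carrier: "finite (carrier G)"
    and hom_p: "p \<in> hom G G" and hom_q: "q \<in> hom G G" and hom_r: "r \<in> hom G G"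
    and p_p: "x \<in> carrier G \<Longrightarrow> p (p x) = x"
    and q_q: "x \<in> carrier G \<Longrightarrow> q (q x) = x"
    and p_q: "x \<in> carrier G \<Longrightarrow> p (q x) = r x"
    and q_p: "x \<in> carrier G \<Longrightarrow> q (p x) = r x"
    and fixed_point_free: "x \<in> carrier G \<Longrightarrow> p x = x \<Longrightarrow> q x = x \<Longrightarrow> x = \<one>"
begin

sublocale P: group_hom G G p
  by (simp add: group_hom_axioms_def group_hom_def hom_p is_group)
sublocale Q: group_hom G G q
  by (simp add: group_hom_axioms_def group_hom_def hom_q is_group)
sublocale R: group_hom G G r
  by (simp add: group_hom_axioms_def group_hom_def hom_r is_group)

lemma q_r: "x \<in> carrier G \<Longrightarrow> q (r x) = p x"
  using q_q[OF P.hom_closed] q_p by simp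

lemma p_r: "x \<in> carrier G \<Longrightarrow> p (r x) = q x"
  using p_p[OF Q.hom_closed] p_q by simp

lemma r_p: "x \<in> carrier G \<Longrightarrow> r (p x) = q x"
  using q_p[OF P.hom_closed] p_p by simp

lemma r_q: "x \<in> carrier G \<Longrightarrow> r (q x) = p x"
  using p_q[OF Q.hom_closed] q_q by simp

lemma r_r: "x \<in> carrier G \<Longrightarrow> r (r x) = x"
  using p_q[OF R.hom_closed] q_r p_p by simp

lemma fpf_four_group_swap: "fpf_four_group G q p r"
  by unfold_locales (auto simp: finite_carrier hom_p hom_q hom_r p_p q_q p_q q_p fixed_point_free)

lemma fpf_four_group_rotate: "fpf_four_group G q r p"
proof unfold_locales
  fix x assume "x \<in> carrier G" "q x = x" "r x = x"
  moreover have "p x = x" using calculation r_q[of x] by simp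
  ultimately show "x = \<one>" using fixed_point_free by blast
qed (auto simp: finite_carrier hom_p hom_q hom_r q_q r_r q_r r_q)

lemma odd_order: "odd (order G)"
proof -
  have "even (order G) \<longleftrightarrow> even (card (fixpts G p))"
    unfolding order_def fixpts_def
    by (rule even_card_iff_even_card_fixpoints) (auto simp: finite_carrier p_p)
  also have "\<dots> \<longleftrightarrow> even (card {x \<in> fixpts G p. q x = x})"
  proof (rule even_card_iff_even_card_fixpoints)
    fix x assume "x \<in> fixpts G p"
    then have xc: "x \<in> carrier G" and px: "p x = x" by (auto simp: fixpts_def)
    have "p (q x) = r x" using p_q[OF xc] .
    also have "\<dots> = q (p x)" using q_p[OF xc] by simp
    finally show "q x \<in> fixpts G p" using xc px by (simp add: fixpts_def)
  qed (auto simp: fixpts_def finite_carrier q_q)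
  also have "{x \<in> fixpts G p. q x = x} = {\<one>}"
    using fixed_point_free by (auto simp: fixpts_def)
  finally show ?thesis by simp
qed

text \<open>On \<open>C\<^sub>G(r)\<close> the map \<open>h \<mapsto> h\<inverse> p(h)\<close> is injective because \<open>C\<^sub>G(V) = 1\<close>, hence onto,
  and \<open>p\<close> inverts every element of the form \<open>h\<inverse> p(h)\<close>.\<close>
lemma p_inverts_fixpts_r:
  assumes y: "y \<in> fixpts G r" shows "p y = inv y"
proof -
  let ?C = "fixpts G r" and ?\<phi> = "\<lambda>h. inv h \<otimes> p h"
  have "?\<phi> ` ?C \<subseteq> ?C"
  proof
    fix z assume "z \<in> ?\<phi> ` ?C"
    then obtain h where hc: "h \<in> carrier G" and rh: "r h = h" and z: "z = ?\<phi> h"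
      by (auto simp: fixpts_def)
    have "r (p h) = p h" using r_p[OF hc] q_r[OF hc] rh by simp
    then show "z \<in> ?C" using hc rh z by (simp add: fixpts_def)
  qed
  moreover have "inj_on ?\<phi> ?C"
  proof
    fix h k assume h: "h \<in> ?C" and k: "k \<in> ?C" and eq: "?\<phi> h = ?\<phi> k"
    have hc: "h \<in> carrier G" and kc: "k \<in> carrier G" using h k by (auto simp: fixpts_def)
    let ?z = "k \<otimes> inv h"
    have "k \<otimes> ?\<phi> h \<otimes> inv (p h) = k \<otimes> ?\<phi> k \<otimes> inv (p h)" using eq by simp
    then have "?z = p k \<otimes> inv (p h)" using hc kc by (simp add: m_assoc)
    moreover have "p ?z = p k \<otimes> inv (p h)" using hc kc by simp
    ultimately have pz: "p ?z = ?z" by simp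
    have rz: "r ?z = ?z" using h k hc kc by (simp add: fixpts_def)
    have zc: "?z \<in> carrier G" using hc kc by simp
    have "q ?z = ?z" by (simp only: p_r[OF zc, symmetric] rz pz)
    then have "?z = \<one>" using fixed_point_free[OF zc pz] by simp
    then show "h = k" using hc kc by (simp add: inv_solve_right')
  qed
  ultimately have "?\<phi> ` ?C = ?C"
    by (intro endo_inj_surj) (auto intro: finite_subset[OF _ finite_carrier] simp: fixpts_def)
  then obtain h where h: "h \<in> ?C" and "y = ?\<phi> h" using y by force
  then show ?thesis by (simp add: fixpts_def p_p inv_mult_group)
qed

lemma fixpts_r_commute:
  assumes x: "x \<in> fixpts G r" and y: "y \<in> fixpts G r" shows "x \<otimes> y = y \<otimes> x"
proof -
  have xc: "x \<in> carrier G" and yc: "y \<in> carrier G" using x y by (auto simp: fixpts_def)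
  have "x \<otimes> y \<in> fixpts G r" using x y by (simp add: fixpts_def)
  then have "inv (x \<otimes> y) = p x \<otimes> p y"
    using xc yc by (simp add: p_inverts_fixpts_r[symmetric])
  then have "inv (x \<otimes> y) = inv x \<otimes> inv y"
    using x y by (simp add: p_inverts_fixpts_r)
  then have "inv (x \<otimes> y) = inv (y \<otimes> x)" using xc yc by (simp add: inv_mult_group)
  then have "inv (inv (x \<otimes> y)) = inv (inv (y \<otimes> x))" by simp
  then show ?thesis using xc yc by simp
qed

lemma q_inverts_fixpts_r: "y \<in> fixpts G r \<Longrightarrow> q y = inv y"
  using fpf_four_group.p_inverts_fixpts_r[OF fpf_four_group_swap] .

lemma q_inverts_fixpts_p: "y \<in> fixpts G p \<Longrightarrow> q y = inv y"
  using fpf_four_group.p_inverts_fixpts_r[OF fpf_four_group_rotate] .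

lemma r_inverts_fixpts_q: "y \<in> fixpts G q \<Longrightarrow> r y = inv y"
  using fpf_four_group.p_inverts_fixpts_r[OF fpf_four_group.fpf_four_group_rotate[OF fpf_four_group_rotate]] .

lemma fixpts_p_commute: "x \<in> fixpts G p \<Longrightarrow> y \<in> fixpts G p \<Longrightarrow> x \<otimes> y = y \<otimes> x"
  using fpf_four_group.fixpts_r_commute[OF fpf_four_group_rotate] .

lemma fixpts_q_commute: "x \<in> fixpts G q \<Longrightarrow> y \<in> fixpts G q \<Longrightarrow> x \<otimes> y = y \<otimes> x"
  using fpf_four_group.fixpts_r_commute[OF fpf_four_group.fpf_four_group_rotate[OF fpf_four_group_rotate]] .

abbreviation star_qr :: "'a \<Rightarrow> 'a \<Rightarrow> 'a" where
  "star_qr a b \<equiv> star G (fixpts G q) (fixpts G r) a b"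

abbreviation star_subgroup :: "'a set" where
  "star_subgroup \<equiv> generate G {star_qr a b | a b. a \<in> fixpts G p \<and> b \<in> fixpts G r}"

text \<open>
  With \<open>y = q(z)\<inverse>\<close>, the square root \<open>w\<close> of \<open>z y\<close> is inverted by \<open>q\<close>; then \<open>u = w y\<inverse>\<close> is
  fixed by \<open>q\<close> and \<open>z = u y u\<close>, so \<open>s = \<surd>u\<close> and \<open>t = s\<inverse> z s\<inverse>\<close> work.
\<close>
lemma sts_decomposition:
  assumes H: "subgroup H G" and qH: "\<And>x. x \<in> H \<Longrightarrow> q x \<in> H"
    and z: "z \<in> H" and pz: "p z = inv z"
  obtains s t where "s \<in> fixpts G q" "t \<in> fixpts G r" "s \<in> H" "t \<in> H" "z = s \<otimes> t \<otimes> s"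
proof -
  have zc: "z \<in> carrier G" using subgroup.mem_carrier[OF H z] .
  define y where "y = inv (q z)"
  have yc: "y \<in> carrier G" and qy: "q y = inv z" and q_inv_y: "q (inv y) = z"
    using zc by (simp_all add: y_def q_q)
  define w where "w = group_sqrt G (z \<otimes> y)"
  have wc: "w \<in> carrier G" using zc yc by (simp add: w_def)
  have "q (z \<otimes> y) = inv (z \<otimes> y)" using zc yc qy by (simp add: y_def inv_mult_group)
  then have qw: "q w = inv w"
    using zc yc by (simp add: w_def endomorphism_group_sqrt[OF hom_q] group_sqrt_inv)
  have z_eq: "z = w \<otimes> w \<otimes> inv y"
    using group_sqrt_square[OF odd_order] zc yc by (simp add: w_def m_assoc)
  define u where "u = w \<otimes> inv y"
  have uc: "u \<in> carrier G" using wc yc by (simp add: u_def)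
  have "q u = inv w \<otimes> z" using wc yc qw q_inv_y by (simp add: u_def)
  then have qu: "q u = u" using z_eq wc yc by (simp add: u_def m_assoc)
  define s where "s = group_sqrt G u"
  have sc: "s \<in> carrier G" using uc by (simp add: s_def)
  have s: "s \<in> fixpts G q" using uc qu by (simp add: s_def fixpts_def endomorphism_group_sqrt[OF hom_q])
  have ss: "s \<otimes> s = u" using group_sqrt_square[OF odd_order uc] by (simp add: s_def)
  define t where "t = inv s \<otimes> z \<otimes> inv s"
  have "r z = y" using zc pz by (simp add: y_def q_p[symmetric])
  moreover have "r (inv s) = s" using sc r_inverts_fixpts_q[OF s] by simp
  ultimately have "r t = s \<otimes> y \<otimes> s" using sc zc by (simp add: t_def)
  moreover have "z = s \<otimes> s \<otimes> y \<otimes> (s \<otimes> s)"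
    using ss z_eq wc yc by (simp add: u_def m_assoc)
  then have "t = s \<otimes> y \<otimes> s" using sc yc by (simp add: t_def m_assoc)
  ultimately have "r t = t" by simp
  then have t: "t \<in> fixpts G r" using sc zc by (simp add: t_def fixpts_def)
  have "y \<in> H" using qH[OF z] H by (simp add: y_def subgroup.m_inv_closed)
  then have "u \<in> H"
    using z H by (simp add: u_def w_def group_sqrt_mem_subgroup subgroup.m_closed subgroup.m_inv_closed)
  then have sH: "s \<in> H" using H by (simp add: s_def group_sqrt_mem_subgroup)
  then have "t \<in> H" using z H by (simp add: t_def subgroup.m_closed subgroup.m_inv_closed)
  moreover have "z = s \<otimes> t \<otimes> s" using sc zc by (simp add: t_def m_assoc)
  ultimately show ?thesis using that s t sH by blast
qed

lemma sts_eq_sandwich_inv_q: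
  assumes s: "s \<in> fixpts G q" and t: "t \<in> fixpts G r"
  shows "s \<otimes> t \<otimes> s = (s \<otimes> s) \<otimes> inv (q (s \<otimes> t \<otimes> s)) \<otimes> (s \<otimes> s)"
proof -
  have sc: "s \<in> carrier G" and tc: "t \<in> carrier G" using s t by (auto simp: fixpts_def)
  have "q (s \<otimes> t \<otimes> s) = s \<otimes> inv t \<otimes> s"
    using s sc tc q_inverts_fixpts_r[OF t] by (simp add: fixpts_def)
  then show ?thesis using sc tc by (simp add: inv_mult_group m_assoc)
qed

lemma sts_decomposition_unique:
  assumes s: "s \<in> fixpts G q" and t: "t \<in> fixpts G r"
    and s': "s' \<in> fixpts G q" and t': "t' \<in> fixpts G r"
    and eq: "s \<otimes> t \<otimes> s = s' \<otimes> t' \<otimes> s'"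
  shows "s = s'"
proof -
  have sc: "s \<in> carrier G" and s'c: "s' \<in> carrier G" and tc: "t \<in> carrier G"
    using s s' t by (auto simp: fixpts_def)
  define z where "z = s \<otimes> t \<otimes> s"
  define y where "y = inv (q z)"
  define u where "u = s \<otimes> s"
  define u' where "u' = s' \<otimes> s'"
  have zc: "z \<in> carrier G" and yc: "y \<in> carrier G" and uc: "u \<in> carrier G" and u'c: "u' \<in> carrier G"
    using sc s'c tc by (simp_all add: z_def y_def u_def u'_def)
  have "u \<in> fixpts G q" "u' \<in> fixpts G q" using s s' by (auto simp: u_def u'_def fixpts_def)
  then have comm: "u' \<otimes> u = u \<otimes> u'" using fixpts_q_commute by blast
  have z: "z = u \<otimes> y \<otimes> u"
    unfolding z_def y_def u_def by (rule sts_eq_sandwich_inv_q[OF s t])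
  have z': "z = u' \<otimes> y \<otimes> u'"
    unfolding z_def y_def u'_def eq by (rule sts_eq_sandwich_inv_q[OF s' t'])
  have "(u \<otimes> inv u') \<otimes> z \<otimes> (u \<otimes> inv u') = u \<otimes> y \<otimes> (u' \<otimes> u \<otimes> inv u')"
    using z' uc u'c yc by (simp add: m_assoc)
  also have "\<dots> = u \<otimes> y \<otimes> u" using comm uc u'c yc by (simp add: m_assoc)
  finally have "(u \<otimes> inv u') \<otimes> z \<otimes> (u \<otimes> inv u') = z" using z by simp
  then have "u \<otimes> inv u' = \<one>"
    using uc u'c zc by (intro odd_order_sandwich_imp_one[OF odd_order]) auto
  then have "s \<otimes> s = s' \<otimes> s'" using uc u'c by (simp add: u_def u'_def inv_solve_right')
  then show ?thesis using square_eq_square_imp_eq[OF odd_order sc s'c] by simp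
qed

lemma star_qr_sts:
  assumes a: "a \<in> fixpts G p" and b: "b \<in> fixpts G r"
  shows "star_qr a b \<in> fixpts G q"
    and "\<exists>t \<in> fixpts G r. inv a \<otimes> b \<otimes> a = star_qr a b \<otimes> t \<otimes> star_qr a b"
proof -
  have ac: "a \<in> carrier G" and bc: "b \<in> carrier G" using a b by (auto simp: fixpts_def)
  define z where "z = inv a \<otimes> b \<otimes> a"
  have zc: "z \<in> carrier G" using ac bc by (simp add: z_def)
  have pz: "p z = inv z"
    using a ac bc p_inverts_fixpts_r[OF b] by (simp add: z_def fixpts_def inv_mult_group m_assoc)
  obtain s t where "s \<in> fixpts G q" "t \<in> fixpts G r" "z = s \<otimes> t \<otimes> s"
    using sts_decomposition[OF subgroup_self Q.hom_closed zc pz] by blast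
  then have "\<exists>!s. \<exists>t. s \<in> fixpts G q \<and> t \<in> fixpts G r \<and> z = s \<otimes> t \<otimes> s"
    using sts_decomposition_unique by blast
  then have "\<exists>t. star_qr a b \<in> fixpts G q \<and> t \<in> fixpts G r \<and> z = star_qr a b \<otimes> t \<otimes> star_qr a b"
    unfolding star_def z_def[symmetric] by (rule theI')
  then show "star_qr a b \<in> fixpts G q"
    and "\<exists>t \<in> fixpts G r. inv a \<otimes> b \<otimes> a = star_qr a b \<otimes> t \<otimes> star_qr a b"
    by (auto simp: z_def)
qed

lemma conj_eq_star_sandwich:
  assumes a: "a \<in> fixpts G p" and b: "b \<in> fixpts G r"
  shows "inv a \<otimes> b \<otimes> a = (star_qr a b \<otimes> star_qr a b) \<otimes> (a \<otimes> b \<otimes> inv a) \<otimes> (star_qr a b \<otimes> star_qr a b)"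
proof -
  have ac: "a \<in> carrier G" and bc: "b \<in> carrier G" using a b by (auto simp: fixpts_def)
  obtain t where t: "t \<in> fixpts G r" and eq: "inv a \<otimes> b \<otimes> a = star_qr a b \<otimes> t \<otimes> star_qr a b"
    using star_qr_sts[OF a b] by blast
  have "inv (q (inv a \<otimes> b \<otimes> a)) = a \<otimes> b \<otimes> inv a"
    using ac bc q_inverts_fixpts_p[OF a] q_inverts_fixpts_r[OF b] by (simp add: inv_mult_group m_assoc)
  with eq have q_eq: "inv (q (star_qr a b \<otimes> t \<otimes> star_qr a b)) = a \<otimes> b \<otimes> inv a" by simp
  from sts_eq_sandwich_inv_q[OF star_qr_sts(1)[OF a b] t] show ?thesis unfolding eq q_eq .
qed

lemma star_qr_mem_normal:
  assumes N: "N \<lhd> G" and a: "a \<in> fixpts G p" and b: "b \<in> fixpts G r"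
    and ab: "commutator G a b \<in> N"
  shows "star_qr a b \<in> N"
proof -
  interpret N: normal N G by (rule N)
  interpret \<pi>: group_hom G "G Mod N" "\<lambda>x. N #> x" by (rule N.rcos_hom)
  have ac: "a \<in> carrier G" and bc: "b \<in> carrier G" using a b by (auto simp: fixpts_def)
  have sc: "star_qr a b \<in> carrier G" using star_qr_sts(1)[OF a b] by (simp add: fixpts_def)
  define u where "u = star_qr a b \<otimes> star_qr a b"
  have uc: "u \<in> carrier G" using sc by (simp add: u_def)
  have comm: "(N #> a) \<otimes>\<^bsub>G Mod N\<^esub> (N #> b) = (N #> b) \<otimes>\<^bsub>G Mod N\<^esub> (N #> a)"
    using N.commutator_mem_imp_rcos_commute[OF ac bc ab] .
  have "N #> (inv a \<otimes> b \<otimes> a) = N #> b"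
    using comm[symmetric] ac bc by (simp add: \<pi>.H.m_assoc)
  moreover have "N #> (a \<otimes> b \<otimes> inv a) = N #> b"
    using comm ac bc by (simp add: \<pi>.H.m_assoc)
  ultimately have "(N #> u) \<otimes>\<^bsub>G Mod N\<^esub> (N #> b) \<otimes>\<^bsub>G Mod N\<^esub> (N #> u) = N #> b"
    using conj_eq_star_sandwich[OF a b] uc ac bc by (simp add: u_def[symmetric])
  then have "N #> u = \<one>\<^bsub>G Mod N\<^esub>"
    using uc bc by (intro \<pi>.H.odd_order_sandwich_imp_one[OF N.odd_order_FactGroup[OF odd_order]]) auto
  then have "star_qr a b \<otimes> star_qr a b \<in> N" using N.rcos_eq_one_iff uc by (simp add: u_def)
  then show ?thesis using square_mem_subgroup_imp_mem[OF odd_order N.subgroup_axioms sc] by blast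
qed

lemma fixpts_product_decomposition:
  assumes H: "subgroup H G" and pH: "\<And>x. x \<in> H \<Longrightarrow> p x \<in> H" and qH: "\<And>x. x \<in> H \<Longrightarrow> q x \<in> H"
    and x: "x \<in> H"
  obtains c s t where "c \<in> fixpts G p" "s \<in> fixpts G q" "t \<in> fixpts G r"
    "c \<in> H" "s \<in> H" "t \<in> H" "x = c \<otimes> (s \<otimes> t \<otimes> s)"
proof -
  have xc: "x \<in> carrier G" using subgroup.mem_carrier[OF H x] .
  define z where "z = group_sqrt G (inv (p x) \<otimes> x)"
  have zc: "z \<in> carrier G" using xc by (simp add: z_def)
  have "p (inv (p x) \<otimes> x) = inv (inv (p x) \<otimes> x)" using xc by (simp add: p_p inv_mult_group)
  then have pz: "p z = inv z"
    using xc by (simp add: z_def endomorphism_group_sqrt[OF hom_p] group_sqrt_inv)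
  have zH: "z \<in> H"
    using H x pH[OF x] by (simp add: z_def group_sqrt_mem_subgroup subgroup.m_closed subgroup.m_inv_closed)
  define c where "c = x \<otimes> inv z"
  have "z \<otimes> z = inv (p x) \<otimes> x" using group_sqrt_square[OF odd_order] xc by (simp add: z_def)
  then have x_eq: "p x \<otimes> (z \<otimes> z) = x" using xc by simp
  have "c = p x \<otimes> (z \<otimes> z) \<otimes> inv z" unfolding c_def x_eq by (rule refl)
  also have "\<dots> = p x \<otimes> z" using xc zc by (simp add: m_assoc)
  finally have "c = p x \<otimes> z" .
  moreover have "p c = p x \<otimes> z" using xc zc pz by (simp add: c_def)
  ultimately have c: "c \<in> fixpts G p" using xc zc by (simp add: fixpts_def)
  have "c \<in> H" using H x zH by (simp add: c_def subgroup.m_closed subgroup.m_inv_closed)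
  moreover obtain s t where "s \<in> fixpts G q" "t \<in> fixpts G r" "s \<in> H" "t \<in> H" "z = s \<otimes> t \<otimes> s"
    using sts_decomposition[OF H qH zH pz] by blast
  moreover have "x = c \<otimes> z" using xc zc by (simp add: c_def m_assoc)
  ultimately show ?thesis using that c by blast
qed

lemma fixpts_product_induct:
  assumes H: "subgroup H G" and pH: "\<And>x. x \<in> H \<Longrightarrow> p x \<in> H" and qH: "\<And>x. x \<in> H \<Longrightarrow> q x \<in> H"
    and x: "x \<in> H"
    and mult: "\<And>a b. a \<in> H \<Longrightarrow> b \<in> H \<Longrightarrow> P a \<Longrightarrow> P b \<Longrightarrow> P (a \<otimes> b)"
    and fixpts: "\<And>f a. f \<in> {p, q, r} \<Longrightarrow> a \<in> fixpts G f \<Longrightarrow> a \<in> H \<Longrightarrow> P a"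
  shows "P x"
proof -
  obtain c s t where "c \<in> fixpts G p" "s \<in> fixpts G q" "t \<in> fixpts G r"
    and H_mem: "c \<in> H" "s \<in> H" "t \<in> H" and x_eq: "x = c \<otimes> (s \<otimes> t \<otimes> s)"
    using fixpts_product_decomposition[OF H pH qH x] by blast
  then have "P c" "P s" "P t" using fixpts by blast+
  then have "P (c \<otimes> (s \<otimes> t \<otimes> s))"
    using H_mem subgroup.m_closed[OF H] by (intro mult) auto
  then show ?thesis by (simp add: x_eq)
qed

lemma star_subgroup_subset_fixpts: "star_subgroup \<subseteq> fixpts G q"
  by (rule generate_subgroup_incl[OF _ fixpts_subgroup[OF hom_q]]) (auto intro: star_qr_sts(1))

lemma star_subgroup_subgroup: "subgroup star_subgroup G"
  by (rule generate_is_subgroup) (use star_qr_sts(1) fixpts_carrier[of _ G q] in blast)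

lemma star_qr_mem_star_subgroup:
  "a \<in> fixpts G p \<Longrightarrow> b \<in> fixpts G r \<Longrightarrow> star_qr a b \<in> star_subgroup"
  by (rule generate.incl) blast

lemma star_subgroup_subset_derived: "star_subgroup \<subseteq> derived G (carrier G)"
proof (rule generate_subgroup_incl, safe)
  show "subgroup (derived G (carrier G)) G"
    using derived_self_is_normal normal_imp_subgroup by blast
  fix a b assume a: "a \<in> fixpts G p" and b: "b \<in> fixpts G r"
  then have "commutator G a b \<in> derived G (carrier G)"
    using commutator_in_lower_central_Suc[of a 0 b] by (simp add: lower_central_0 lower_central_Suc_0 fixpts_def)
  then show "star_qr a b \<in> derived G (carrier G)"
    using star_qr_mem_normal[OF derived_self_is_normal a b] by blast
qed

end

section \<open>Central sections of the lower central series\<close>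

locale central_section = fpf_four_group +
  fixes L N :: "'a set"
  assumes L_normal: "L \<lhd> G" and N_normal: "N \<lhd> G"
    and q_N: "x \<in> N \<Longrightarrow> q x \<in> N"
    and commutator_L_mem_N: "w \<in> L \<Longrightarrow> y \<in> carrier G \<Longrightarrow> commutator G w y \<in> N"
begin

sublocale L: normal L G by (rule L_normal)
sublocale N: normal N G by (rule N_normal)
sublocale \<pi>: group_hom G "G Mod N" "\<lambda>x. N #> x" by (rule N.rcos_hom)

lemma rcos_L_central:
  "w \<in> L \<Longrightarrow> y \<in> carrier G \<Longrightarrow>
    (N #> w) \<otimes>\<^bsub>G Mod N\<^esub> (N #> y) = (N #> y) \<otimes>\<^bsub>G Mod N\<^esub> (N #> w)"
  by (rule N.commutator_mem_imp_rcos_commute) (auto intro: commutator_L_mem_N)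

lemma rcos_conj_L:
  assumes w: "w \<in> L" and y: "y \<in> carrier G" shows "N #> (y \<otimes> w \<otimes> inv y) = N #> w"
proof -
  have wc: "w \<in> carrier G" using w by auto
  have "N #> (y \<otimes> w \<otimes> inv y) = (N #> y) \<otimes>\<^bsub>G Mod N\<^esub> (N #> w) \<otimes>\<^bsub>G Mod N\<^esub> inv\<^bsub>G Mod N\<^esub> (N #> y)"
    using wc y by simp
  also have "\<dots> = (N #> w) \<otimes>\<^bsub>G Mod N\<^esub> (N #> y) \<otimes>\<^bsub>G Mod N\<^esub> inv\<^bsub>G Mod N\<^esub> (N #> y)"
    using rcos_L_central[OF w y] by simp
  also have "\<dots> = N #> w" using wc y by (simp add: \<pi>.H.m_assoc)
  finally show ?thesis .
qed

lemma rcos_commutator_mult_right: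
  assumes x: "x \<in> carrier G" and y: "y \<in> carrier G" and y': "y' \<in> carrier G"
    and xy': "commutator G x y' \<in> L"
  shows "N #> commutator G x (y \<otimes> y') = N #> (commutator G x y \<otimes> commutator G x y')"
  using rcos_conj_L[OF xy' y] x y y' by (simp add: commutator_mult_right)

lemma rcos_commutator_inv_left:
  assumes x: "x \<in> carrier G" and y: "y \<in> carrier G" and xy: "commutator G x y \<in> L"
  shows "N #> commutator G (inv x) y = inv\<^bsub>G Mod N\<^esub> (N #> commutator G x y)"
  using rcos_conj_L[OF L.m_inv_closed[OF xy] inv_closed[OF x]] x y by (simp add: commutator_inv_left)

lemma rcos_commutator_inv_right:
  assumes x: "x \<in> carrier G" and y: "y \<in> carrier G" and xy: "commutator G x y \<in> L"
  shows "N #> commutator G x (inv y) = inv\<^bsub>G Mod N\<^esub> (N #> commutator G x y)"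
  using rcos_conj_L[OF L.m_inv_closed[OF xy] inv_closed[OF y]] x y by (simp add: commutator_inv_right)

text \<open>
  Since \<open>L\<close> is central modulo \<open>N\<close>, the norm \<open>w \<mapsto> w q(w)\<close> is a homomorphism on \<open>L\<close> modulo
  \<open>N\<close>; \<open>star_normed\<close> is the preimage of \<open>R N\<close> under it.
\<close>
definition star_normed :: "'a set" where
  "star_normed = {w \<in> L. \<exists>\<rho> \<in> star_subgroup. N #> (w \<otimes> q w) = N #> \<rho>}"

lemma star_normed_subgroup: "subgroup star_normed G"
proof (rule subgroupI)
  show "star_normed \<subseteq> carrier G" by (auto simp: star_normed_def)
  have "\<one> \<in> star_normed"
    using subgroup.one_closed[OF star_subgroup_subgroup]
    by (auto simp: star_normed_def intro!: bexI[of _ \<one>])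
  then show "star_normed \<noteq> {}" by blast
next
  fix w assume "w \<in> star_normed"
  then obtain \<rho> where w: "w \<in> L" and \<rho>: "\<rho> \<in> star_subgroup" and eq: "N #> (w \<otimes> q w) = N #> \<rho>"
    by (auto simp: star_normed_def)
  have wc: "w \<in> carrier G" and \<rho>c: "\<rho> \<in> carrier G"
    using w \<rho> subgroup.mem_carrier[OF star_subgroup_subgroup] by auto
  have "N #> (inv w \<otimes> q (inv w)) = inv\<^bsub>G Mod N\<^esub> ((N #> q w) \<otimes>\<^bsub>G Mod N\<^esub> (N #> w))"
    using wc by (simp add: \<pi>.H.inv_mult_group)
  also have "\<dots> = N #> inv \<rho>"
    using rcos_L_central[OF w Q.hom_closed[OF wc]] eq wc \<rho>c by (simp flip: \<pi>.hom_mult)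
  finally show "inv w \<in> star_normed"
    using w \<rho> subgroup.m_inv_closed[OF star_subgroup_subgroup] by (auto simp: star_normed_def)
next
  fix w w' assume "w \<in> star_normed" "w' \<in> star_normed"
  then obtain \<rho> \<rho>' where w: "w \<in> L" and w': "w' \<in> L"
    and \<rho>: "\<rho> \<in> star_subgroup" and \<rho>': "\<rho>' \<in> star_subgroup"
    and eq: "N #> (w \<otimes> q w) = N #> \<rho>" and eq': "N #> (w' \<otimes> q w') = N #> \<rho>'"
    by (auto simp: star_normed_def)
  have wc: "w \<in> carrier G" and w'c: "w' \<in> carrier G" using w w' by auto
  have \<rho>c: "\<rho> \<in> carrier G" and \<rho>'c: "\<rho>' \<in> carrier G"
    using \<rho> \<rho>' subgroup.mem_carrier[OF star_subgroup_subgroup] by auto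
  have "N #> (w \<otimes> w' \<otimes> q (w \<otimes> w')) =
      (N #> w) \<otimes>\<^bsub>G Mod N\<^esub> ((N #> w') \<otimes>\<^bsub>G Mod N\<^esub> (N #> q w)) \<otimes>\<^bsub>G Mod N\<^esub> (N #> q w')"
    using wc w'c by (simp add: \<pi>.H.m_assoc)
  also have "\<dots> = (N #> (w \<otimes> q w)) \<otimes>\<^bsub>G Mod N\<^esub> (N #> (w' \<otimes> q w'))"
    using rcos_L_central[OF w' Q.hom_closed[OF wc]] wc w'c by (simp add: \<pi>.H.m_assoc)
  also have "\<dots> = N #> (\<rho> \<otimes> \<rho>')" using eq eq' \<rho>c \<rho>'c by simp
  finally show "w \<otimes> w' \<in> star_normed"
    using w w' \<rho> \<rho>' subgroup.m_closed[OF star_subgroup_subgroup] by (auto simp: star_normed_def)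
qed

lemma star_normed_rcos_cong:
  assumes w: "w \<in> star_normed" and w': "w' \<in> L" and eq: "N #> w' = N #> w"
  shows "w' \<in> star_normed"
proof -
  obtain \<rho> where wL: "w \<in> L" and \<rho>: "\<rho> \<in> star_subgroup" and w_eq: "N #> (w \<otimes> q w) = N #> \<rho>"
    using w by (auto simp: star_normed_def)
  have wc: "w \<in> carrier G" and w'c: "w' \<in> carrier G" using wL w' by auto
  have "w' \<otimes> inv w \<in> N" using eq wc w'c by (simp add: N.rcos_eq_iff)
  then have "q (w' \<otimes> inv w) \<in> N" by (rule q_N)
  then have "N #> q w' = N #> q w" using wc w'c by (simp add: N.rcos_eq_iff)
  then have "N #> (w' \<otimes> q w') = N #> \<rho>" using eq w_eq wc w'c by simp
  then show ?thesis using w' \<rho> by (auto simp: star_normed_def)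
qed

lemma commutator_mult_right_mem_star_normed:
  assumes x: "x \<in> carrier G" and y: "y \<in> carrier G" and y': "y' \<in> carrier G"
    and xy: "commutator G x y \<in> star_normed" and xy': "commutator G x y' \<in> star_normed"
  shows "commutator G x (y \<otimes> y') \<in> star_normed"
proof (rule star_normed_rcos_cong)
  have "commutator G x y \<in> L" "commutator G x y' \<in> L" using xy xy' by (auto simp: star_normed_def)
  then show "commutator G x (y \<otimes> y') \<in> L"
    using x y y' by (simp add: commutator_mult_right L.inv_op_closed2)
  show "commutator G x y \<otimes> commutator G x y' \<in> star_normed"
    using xy xy' by (rule subgroup.m_closed[OF star_normed_subgroup])
  show "N #> commutator G x (y \<otimes> y') = N #> (commutator G x y \<otimes> commutator G x y')"
    using rcos_commutator_mult_right x y y' \<open>commutator G x y' \<in> L\<close> .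
qed

lemma commutator_swap_mem_star_normed:
  assumes "x \<in> carrier G" "y \<in> carrier G" "commutator G x y \<in> star_normed"
  shows "commutator G y x \<in> star_normed"
proof -
  have "inv (commutator G x y) \<in> star_normed"
    using assms(3) by (rule subgroup.m_inv_closed[OF star_normed_subgroup])
  then show ?thesis using assms(1,2) by (simp add: inv_commutator)
qed

lemma commutator_mult_left_mem_star_normed:
  assumes x: "x \<in> carrier G" and x': "x' \<in> carrier G" and y: "y \<in> carrier G"
    and xy: "commutator G x y \<in> star_normed" and x'y: "commutator G x' y \<in> star_normed"
  shows "commutator G (x \<otimes> x') y \<in> star_normed"
proof -
  have "commutator G y (x \<otimes> x') \<in> star_normed"
    using commutator_swap_mem_star_normed[OF x y xy] commutator_swap_mem_star_normed[OF x' y x'y] x x' y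
    by (simp add: commutator_mult_right_mem_star_normed)
  then show ?thesis using x x' y by (simp add: commutator_swap_mem_star_normed)
qed

lemma commutator_q_fixed_q_inverted_mem_star_normed:
  assumes x: "x \<in> carrier G" and y: "y \<in> carrier G" and qx: "q x = x" and qy: "q y = inv y"
    and xy: "commutator G x y \<in> L"
  shows "commutator G x y \<in> star_normed"
proof -
  have "q (commutator G x y) = commutator G x (inv y)"
    using x y by (simp add: Q.hom_commutator qx qy)
  then have "N #> (commutator G x y \<otimes> q (commutator G x y)) = N #> \<one>"
    using rcos_commutator_inv_right[OF x y xy] x y by simp
  moreover have "\<one> \<in> star_subgroup" by (rule generate.one)
  ultimately show ?thesis using xy unfolding star_normed_def by blast
qed

lemma rcos_commutator_inv_inv:
  assumes x: "x \<in> carrier G" and y: "y \<in> carrier G" and xy: "commutator G x y \<in> L"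
  shows "N #> commutator G (inv x) (inv y) = N #> commutator G x y"
proof -
  have "commutator G x (inv y) \<in> L"
    using x y xy by (simp add: commutator_inv_right L.inv_op_closed1)
  then show ?thesis
    using x y xy by (simp add: rcos_commutator_inv_left rcos_commutator_inv_right)
qed

text \<open>Modulo \<open>N\<close>, the identity \<open>conj_eq_star_sandwich\<close> reads \<open>[a,b]\<inverse> b = u\<^sup>2 [a,b] b\<close>.\<close>
lemma rcos_commutator_p_r_square:
  assumes a: "a \<in> fixpts G p" and b: "b \<in> fixpts G r" and ab: "commutator G a b \<in> L"
  defines "u \<equiv> star_qr a b \<otimes> star_qr a b"
  shows "N #> (commutator G a b \<otimes> commutator G a b) = N #> inv (u \<otimes> u)"
proof -
  have ac: "a \<in> carrier G" and bc: "b \<in> carrier G" using a b by (auto simp: fixpts_def)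
  have uL: "u \<in> L" using star_qr_mem_normal[OF L_normal a b ab] by (simp add: u_def)
  have uc: "u \<in> carrier G" using uL by auto
  define k where "k = N #> commutator G a b"
  define v where "v = N #> u"
  define \<beta> where "\<beta> = N #> b"
  have kc: "k \<in> carrier (G Mod N)" and vc: "v \<in> carrier (G Mod N)" and \<beta>c: "\<beta> \<in> carrier (G Mod N)"
    using ac bc uc by (simp_all add: k_def v_def \<beta>_def)
  have "inv a \<otimes> b \<otimes> a = commutator G (inv a) b \<otimes> b"
    using ac bc by (simp add: commutator_def m_assoc)
  then have left: "N #> (inv a \<otimes> b \<otimes> a) = inv\<^bsub>G Mod N\<^esub> k \<otimes>\<^bsub>G Mod N\<^esub> \<beta>"
    using ac bc by (simp add: rcos_commutator_inv_left[OF ac bc ab] k_def \<beta>_def)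
  have "a \<otimes> b \<otimes> inv a = commutator G a b \<otimes> b"
    using ac bc by (simp add: commutator_def m_assoc)
  then have right: "N #> (a \<otimes> b \<otimes> inv a) = k \<otimes>\<^bsub>G Mod N\<^esub> \<beta>"
    using ac bc by (simp add: k_def \<beta>_def)
  have "inv\<^bsub>G Mod N\<^esub> k \<otimes>\<^bsub>G Mod N\<^esub> \<beta> = v \<otimes>\<^bsub>G Mod N\<^esub> (k \<otimes>\<^bsub>G Mod N\<^esub> \<beta>) \<otimes>\<^bsub>G Mod N\<^esub> v"
    using conj_eq_star_sandwich[OF a b] left right ac bc uc by (simp add: v_def u_def[symmetric])
  also have "\<dots> = v \<otimes>\<^bsub>G Mod N\<^esub> v \<otimes>\<^bsub>G Mod N\<^esub> k \<otimes>\<^bsub>G Mod N\<^esub> \<beta>"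
  proof -
    have "(k \<otimes>\<^bsub>G Mod N\<^esub> \<beta>) \<otimes>\<^bsub>G Mod N\<^esub> v = v \<otimes>\<^bsub>G Mod N\<^esub> (k \<otimes>\<^bsub>G Mod N\<^esub> \<beta>)"
      using rcos_L_central[OF uL, of "commutator G a b \<otimes> b"] ac bc by (simp add: k_def v_def \<beta>_def)
    then show ?thesis using kc vc \<beta>c by (simp add: \<pi>.H.m_assoc)
  qed
  finally have "inv\<^bsub>G Mod N\<^esub> k = (v \<otimes>\<^bsub>G Mod N\<^esub> v) \<otimes>\<^bsub>G Mod N\<^esub> k"
    using kc vc \<beta>c by simp
  moreover have "k \<otimes>\<^bsub>G Mod N\<^esub> (v \<otimes>\<^bsub>G Mod N\<^esub> v) = (v \<otimes>\<^bsub>G Mod N\<^esub> v) \<otimes>\<^bsub>G Mod N\<^esub> k"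
    using rcos_L_central[OF ab, of "u \<otimes> u"] uc by (simp add: k_def v_def)
  ultimately have "k \<otimes>\<^bsub>G Mod N\<^esub> k = inv\<^bsub>G Mod N\<^esub> (v \<otimes>\<^bsub>G Mod N\<^esub> v)"
    using kc vc by (intro \<pi>.H.square_eq_inv_of_inv_eq_mult) auto
  then show ?thesis using ac bc uc by (simp add: k_def v_def)
qed

lemma commutator_p_r_mem_star_normed:
  assumes a: "a \<in> fixpts G p" and b: "b \<in> fixpts G r" and ab: "commutator G a b \<in> L"
  shows "commutator G a b \<in> star_normed"
proof -
  have ac: "a \<in> carrier G" and bc: "b \<in> carrier G" using a b by (auto simp: fixpts_def)
  define u where "u = star_qr a b \<otimes> star_qr a b"
  have "q (commutator G a b) = commutator G (inv a) (inv b)"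
    using ac bc q_inverts_fixpts_p[OF a] q_inverts_fixpts_r[OF b] by (simp add: Q.hom_commutator)
  then have "N #> (commutator G a b \<otimes> q (commutator G a b)) = N #> inv (u \<otimes> u)"
    using rcos_commutator_p_r_square[OF a b ab] rcos_commutator_inv_inv[OF ac bc ab] ac bc
    by (simp add: u_def)
  moreover have "inv (u \<otimes> u) \<in> star_subgroup"
    using star_qr_mem_star_subgroup[OF a b] star_subgroup_subgroup
    by (simp add: u_def subgroup.m_closed subgroup.m_inv_closed)
  ultimately show ?thesis using ab by (auto simp: star_normed_def)
qed

lemma commutator_fixpts_mem_star_normed:
  assumes f: "f \<in> {p, q, r}" and g: "g \<in> {p, q, r}"
    and x: "x \<in> fixpts G f" and y: "y \<in> fixpts G g" and xy: "commutator G x y \<in> L"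
  shows "commutator G x y \<in> star_normed"
proof -
  have xc: "x \<in> carrier G" and yc: "y \<in> carrier G" using x y by (auto simp: fixpts_def)
  have yx: "commutator G y x \<in> L" using xy xc yc by (metis inv_commutator L.m_inv_closed)
  have q_inv: "q h = inv h" if "h \<in> fixpts G p \<or> h \<in> fixpts G r" for h
    using that q_inverts_fixpts_p q_inverts_fixpts_r by blast
  show ?thesis
  proof (cases "f = g")
    case True
    then have "x \<otimes> y = y \<otimes> x"
      using f x y fixpts_p_commute fixpts_q_commute fixpts_r_commute by auto
    then have "commutator G x y = \<one>" using xc yc by (simp add: commutator_eq_one_iff)
    then show ?thesis using subgroup.one_closed[OF star_normed_subgroup] by simp
  next
    case False
    with f g consider "f = q" "g \<in> {p, r}" | "g = q" "f \<in> {p, r}" | "f = p" "g = r" | "f = r" "g = p"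
      by auto
    then show ?thesis
    proof cases
      case 1
      then show ?thesis
        using x y xc yc xy q_inv by (intro commutator_q_fixed_q_inverted_mem_star_normed) (auto simp: fixpts_def)
    next
      case 2
      then have "commutator G y x \<in> star_normed"
        using x y xc yc yx q_inv by (intro commutator_q_fixed_q_inverted_mem_star_normed) (auto simp: fixpts_def)
      then show ?thesis by (rule commutator_swap_mem_star_normed[OF yc xc])
    next
      case 3
      then show ?thesis using x y xy by (simp add: commutator_p_r_mem_star_normed)
    next
      case 4
      then have "commutator G y x \<in> star_normed" using x y yx by (simp add: commutator_p_r_mem_star_normed)
      then show ?thesis by (rule commutator_swap_mem_star_normed[OF yc xc])
    qed
  qed
qed

lemma commutator_fixpts_left_mem_star_normed:
  assumes f: "f \<in> {p, q, r}" and x: "x \<in> fixpts G f"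
    and xL: "\<And>y. y \<in> carrier G \<Longrightarrow> commutator G x y \<in> L" and y: "y \<in> carrier G"
  shows "commutator G x y \<in> star_normed"
proof (rule fixpts_product_induct[OF subgroup_self P.hom_closed Q.hom_closed y])
  have xc: "x \<in> carrier G" using x by (simp add: fixpts_def)
  show "commutator G x (a \<otimes> b) \<in> star_normed"
    if "a \<in> carrier G" "b \<in> carrier G" "commutator G x a \<in> star_normed" "commutator G x b \<in> star_normed"
    for a b
    using commutator_mult_right_mem_star_normed[OF xc that] .
  show "commutator G x a \<in> star_normed" if "g \<in> {p, q, r}" "a \<in> fixpts G g" "a \<in> carrier G" for g a
    using commutator_fixpts_mem_star_normed[OF f that(1) x that(2) xL[OF that(3)]] .
qed

lemma commutator_mem_star_normed:
  assumes M: "subgroup M G" and pM: "\<And>x. x \<in> M \<Longrightarrow> p x \<in> M" and qM: "\<And>x. x \<in> M \<Longrightarrow> q x \<in> M"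
    and comm_M: "\<And>x y. x \<in> M \<Longrightarrow> y \<in> carrier G \<Longrightarrow> commutator G x y \<in> L"
    and x: "x \<in> M" and y: "y \<in> carrier G"
  shows "commutator G x y \<in> star_normed"
proof (rule fixpts_product_induct[OF M pM qM x])
  show "commutator G (a \<otimes> b) y \<in> star_normed"
    if "a \<in> M" "b \<in> M" "commutator G a y \<in> star_normed" "commutator G b y \<in> star_normed" for a b
    using commutator_mult_left_mem_star_normed[OF subgroup.mem_carrier[OF M that(1)]
        subgroup.mem_carrier[OF M that(2)] y that(3,4)] .
  show "commutator G a y \<in> star_normed" if "g \<in> {p, q, r}" "a \<in> fixpts G g" "a \<in> M" for g a
    using commutator_fixpts_left_mem_star_normed[OF that(1,2) comm_M[OF that(3)] y] .
qed

lemma fixpts_q_star_normed_approx: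
  assumes g: "g \<in> fixpts G q" and gR: "g \<in> star_normed"
  shows "\<exists>\<rho> \<in> star_subgroup. g \<otimes> inv \<rho> \<in> N"
proof -
  have gc: "g \<in> carrier G" and qg: "q g = g" using g by (auto simp: fixpts_def)
  obtain \<rho>\<^sub>0 where \<rho>\<^sub>0: "\<rho>\<^sub>0 \<in> star_subgroup" and eq: "N #> (g \<otimes> g) = N #> \<rho>\<^sub>0"
    using gR qg by (auto simp: star_normed_def)
  define \<rho> where "\<rho> = group_sqrt G \<rho>\<^sub>0"
  have \<rho>: "\<rho> \<in> star_subgroup" using \<rho>\<^sub>0 star_subgroup_subgroup by (simp add: \<rho>_def group_sqrt_mem_subgroup)
  have \<rho>\<^sub>0c: "\<rho>\<^sub>0 \<in> carrier G" using \<rho>\<^sub>0 subgroup.mem_carrier[OF star_subgroup_subgroup] by blast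
  have \<rho>c: "\<rho> \<in> carrier G" using \<rho>\<^sub>0c by (simp add: \<rho>_def)
  have "(N #> g) \<otimes>\<^bsub>G Mod N\<^esub> (N #> g) = N #> \<rho>\<^sub>0" using eq gc by simp
  also have "\<dots> = (N #> \<rho>) \<otimes>\<^bsub>G Mod N\<^esub> (N #> \<rho>)"
    using group_sqrt_square[OF odd_order \<rho>\<^sub>0c] \<rho>c by (simp flip: \<rho>_def \<pi>.hom_mult)
  finally have "N #> g = N #> \<rho>"
    by (rule \<pi>.H.square_eq_square_imp_eq[OF N.odd_order_FactGroup[OF odd_order]
          \<pi>.hom_closed[OF gc] \<pi>.hom_closed[OF \<rho>c]])
  then show ?thesis using \<rho> gc \<rho>c by (auto simp: N.rcos_eq_iff)
qed

end

section \<open>Fixed points in the derived subgroup\<close>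

context fpf_four_group
begin

lemma fixpts_q_lower_central_step:
  assumes g: "g \<in> fixpts G q" and gL: "g \<in> lower_central G (Suc k)"
  shows "\<exists>\<rho> \<in> star_subgroup. g \<otimes> inv \<rho> \<in> lower_central G (Suc (Suc k))"
proof -
  interpret central_section G p q r "lower_central G (Suc k)" "lower_central G (Suc (Suc k))"
    using endomorphism_image_lower_central[OF hom_q]
    by (intro central_section.intro fpf_four_group_axioms central_section_axioms.intro
        lower_central_normal) (auto simp: commutator_in_lower_central_Suc)
  have "generate G {commutator G h y | h y. h \<in> lower_central G k \<and> y \<in> carrier G} \<subseteq> star_normed"
  proof (rule generate_subgroup_incl[OF _ star_normed_subgroup], safe)
    fix h y assume "h \<in> lower_central G k" "y \<in> carrier G"
    then show "commutator G h y \<in> star_normed"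
      using endomorphism_image_lower_central[OF hom_p] endomorphism_image_lower_central[OF hom_q]
      by (intro commutator_mem_star_normed[OF lower_central_subgroup])
        (auto simp: commutator_in_lower_central_Suc image_subset_iff)
  qed
  then have "g \<in> star_normed" using gL by (auto simp: lower_central_Suc[of k])
  then show ?thesis using fixpts_q_star_normed_approx[OF g] by blast
qed

lemma fixpts_q_derived_approx:
  assumes g: "g \<in> fixpts G q" and g': "g \<in> derived G (carrier G)"
  shows "\<exists>\<rho> \<in> star_subgroup. g \<otimes> inv \<rho> \<in> lower_central G (Suc k)"
proof (induction k)
  case 0
  have "g \<otimes> inv \<one> \<in> lower_central G (Suc 0)"
    using g g' by (simp add: lower_central_Suc_0 fixpts_def)
  then show ?case using subgroup.one_closed[OF star_subgroup_subgroup] by blast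
next
  case (Suc k)
  then obtain \<rho> where \<rho>: "\<rho> \<in> star_subgroup" and approx: "g \<otimes> inv \<rho> \<in> lower_central G (Suc k)"
    by blast
  have gc: "g \<in> carrier G" using g by (simp add: fixpts_def)
  have \<rho>c: "\<rho> \<in> carrier G" using subgroup.mem_carrier[OF star_subgroup_subgroup \<rho>] .
  have "g \<otimes> inv \<rho> \<in> fixpts G q"
    using g \<rho> star_subgroup_subset_fixpts fixpts_subgroup[OF hom_q]
    by (meson subgroup.m_closed subgroup.m_inv_closed subsetD)
  then obtain \<rho>' where \<rho>': "\<rho>' \<in> star_subgroup"
    and "g \<otimes> inv \<rho> \<otimes> inv \<rho>' \<in> lower_central G (Suc (Suc k))"
    using fixpts_q_lower_central_step approx by blast
  moreover have "g \<otimes> inv \<rho> \<otimes> inv \<rho>' = g \<otimes> inv (\<rho>' \<otimes> \<rho>)"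
    using gc \<rho>c \<rho>' subgroup.mem_carrier[OF star_subgroup_subgroup] by (simp add: inv_mult_group m_assoc)
  ultimately show ?case using \<rho> \<rho>' subgroup.m_closed[OF star_subgroup_subgroup] by auto
qed

lemma fixpts_q_inter_derived:
  assumes nilpotent: "lower_central G n = {\<one>}"
  shows "fixpts G q \<inter> derived G (carrier G) = star_subgroup"
proof
  show "star_subgroup \<subseteq> fixpts G q \<inter> derived G (carrier G)"
    using star_subgroup_subset_fixpts star_subgroup_subset_derived by blast
  show "fixpts G q \<inter> derived G (carrier G) \<subseteq> star_subgroup"
  proof
    fix g assume "g \<in> fixpts G q \<inter> derived G (carrier G)"
    then have g: "g \<in> fixpts G q" "g \<in> derived G (carrier G)" and gc: "g \<in> carrier G"
      by (auto simp: fixpts_def)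
    then obtain \<rho> where \<rho>: "\<rho> \<in> star_subgroup" and "g \<otimes> inv \<rho> \<in> lower_central G (Suc n)"
      using fixpts_q_derived_approx[OF g] by blast
    then have "g \<otimes> inv \<rho> = \<one>" using lower_central_Suc_subset nilpotent by blast
    then show "g \<in> star_subgroup"
      using gc \<rho> subgroup.mem_carrier[OF star_subgroup_subgroup] by (simp add: inv_solve_right')
  qed
qed

end

lemma four_group_action_imp_fpf_four_group:
  assumes "group G" and "finite (carrier G)" and "four_group_action G v1 v2 v3"
    and "fixpts G v1 \<inter> fixpts G v2 \<inter> fixpts G v3 = {\<one>\<^bsub>G\<^esub>}"
  shows "fpf_four_group G v1 v2 v3"
proof -
  interpret group G by (rule assms(1))
  have hom: "v1 \<in> hom G G" "v2 \<in> hom G G" "v3 \<in> hom G G"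
    using assms(3) by (auto simp: four_group_action_def iso_def)
  then have closed: "v1 x \<in> carrier G" "v2 x \<in> carrier G" if "x \<in> carrier G" for x
    using that by (auto simp: hom_def)
  have inv: "v1 (v1 x) = x" "v2 (v2 x) = x" "v3 (v3 x) = x" "v1 (v2 x) = v3 x"
    if "x \<in> carrier G" for x
    using assms(3) that by (auto simp: four_group_action_def)
  have "v2 (v1 x) = v3 x" if x: "x \<in> carrier G" for x
  proof -
    have "v1 (v2 (v1 (v2 x))) = x" using inv(3,4) closed x by metis
    then have "v2 (v1 (v2 x)) = v1 x" using inv(1) closed x by metis
    then have "v2 (v1 (v2 (v2 x))) = v1 (v2 x)" using inv closed x by metis
    then show ?thesis using inv(2,4) x by simp
  qed
  moreover have "x = \<one>\<^bsub>G\<^esub>" if x: "x \<in> carrier G" "v1 x = x" "v2 x = x" for x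
  proof -
    have "v3 x = x" using inv(4)[OF x(1)] x by simp
    then show ?thesis using assms(4) x by (auto simp: fixpts_def)
  qed
  ultimately show ?thesis
    using assms(1,2) hom inv by (simp add: fpf_four_group_def fpf_four_group_axioms_def)
qed

theorem lemma4p7:
  fixes G :: "('a, 'b) monoid_scheme" and v1 v2 v3 :: "'a \<Rightarrow> 'a"
  assumes "nilpotent_group G" and "finite (carrier G)"
    and "four_group_action G v1 v2 v3"
    and "fixpts G v1 \<inter> fixpts G v2 \<inter> fixpts G v3 = {\<one>\<^bsub>G\<^esub>}"
  shows "(fixpts G v1 \<inter> derived G (carrier G) =
           generate G {star G (fixpts G v1) (fixpts G v3) a b | a b. a \<in> fixpts G v2 \<and> b \<in> fixpts G v3}) \<and>
         (fixpts G v2 \<inter> derived G (carrier G) =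
           generate G {star G (fixpts G v2) (fixpts G v3) a b | a b. a \<in> fixpts G v1 \<and> b \<in> fixpts G v3}) \<and>
         (fixpts G v3 \<inter> derived G (carrier G) =
           generate G {star G (fixpts G v3) (fixpts G v2) a b | a b. a \<in> fixpts G v1 \<and> b \<in> fixpts G v2})"
proof -
  obtain n where group: "group G" and nilpotent: "lower_central G n = {\<one>\<^bsub>G\<^esub>}"
    using assms(1) by (auto simp: nilpotent_group_def)
  interpret fpf_four_group G v1 v2 v3
    using four_group_action_imp_fpf_four_group[OF group assms(2-4)] .
  show ?thesis
    using fpf_four_group.fixpts_q_inter_derived[OF fpf_four_group_swap nilpotent]
      fixpts_q_inter_derived[OF nilpotent]
      fpf_four_group.fixpts_q_inter_derived[OF fpf_four_group.fpf_four_group_swap[OF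
        fpf_four_group.fpf_four_group_rotate[OF fpf_four_group_rotate]] nilpotent]
    by blast
qed

end
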